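(* Let $n=p_1^{\alpha_1}p_2^{\alpha_2}p_3^{\alpha_3}$, where $\alpha_1,\alpha_2,\alpha_3$ are positive integers and $p_1<p_2<p_3$ are primes. If $p_3\geq 2p_2+1$, then $\delta(\mathcal{P}(C_n))=\deg(p_3^{\alpha_3})$.
   Context: For a finite group $G$, the power graph $\mathcal{P}(G)$ is the simple undirected graph with vertex set $G$ in which two distinct vertices are adjacent if one is an integral power of the other. $C_n$ denotes the cyclic group of order $n$, identified with $\mathbb{Z}_n=\{0,1,\ldots,n-1\}$, so a positive divisor $d<n$ of $n$ is regarded as the element $d\in\mathbb{Z}_n$. $\deg(a)$ is the degree of vertex $a$ in $\mathcal{P}(C_n)$ and $\delta$ denotes minimum degree. *)

theory Defs
  imports "HOL-Computational_Algebra.Primes"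
begin

text \<open>The cyclic group C_n is identified with Z_n = {0,..,n-1} under addition mod n.
  An integral power of a is a multiple k*a (mod n) for an integer k; since k ranges over
  all integers and the group is finite, natural k suffice.\<close>

definition is_power_cyc :: "nat \<Rightarrow> nat \<Rightarrow> nat \<Rightarrow> bool" where
  "is_power_cyc n b a \<longleftrightarrow> (\<exists>k::int. int b = (k * int a) mod int n)"

definition pg_adj :: "nat \<Rightarrow> nat \<Rightarrow> nat \<Rightarrow> bool" where
  "pg_adj n a b \<longleftrightarrow> a \<in> {0..<n} \<and> b \<in> {0..<n} \<and> a \<noteq> b \<and>
     (is_power_cyc n b a \<or> is_power_cyc n a b)"

definition pg_deg :: "nat \<Rightarrow> nat \<Rightarrow> nat" where
  "pg_deg n a = card {b \<in> {0..<n}. pg_adj n a b}"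

definition pg_min_deg :: "nat \<Rightarrow> nat" where
  "pg_min_deg n = Min (pg_deg n ` {0..<n})"

end

theory Submission
  imports Defs Complex_Main
begin

text \<open>Two residues are adjacent in the power graph of \<open>C_n\<close> iff their gcds with \<open>n\<close> are
  comparable under divisibility, so \<open>deg a = n - 1 - N (gcd a n)\<close>, where \<open>N d\<close> counts the
  residues whose gcd with \<open>n\<close> is incomparable with \<open>d\<close>; the minimum degree is attained where
  \<open>N\<close> is maximal. For \<open>d = p^x q^y r^z\<close>, inclusion-exclusion over the events
  \<open>p^(x+1) | s\<close>, \<open>q^(y+1) | s\<close>, \<open>r^(z+1) | s\<close> (and their analogues above \<open>d\<close>) writes \<open>N d / n\<close>
  as a polynomial in the proportions \<open>p^-x\<close>, \<open>p^-(x+1)\<close>, \<dots>. Comparing it with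
  \<open>N (r^c) / n = (1 - (1 - 1/p)(1 - 1/q))(1 - r^-c)\<close> splits into the cases \<open>x > 0\<close>,
  \<open>x = 0 < y\<close> and \<open>x = y = 0\<close>, each an elementary inequality in which \<open>r \<ge> 2q + 1\<close> is used.\<close>

section \<open>Degrees in the power graph of a cyclic group\<close>

lemma is_power_cyc_iff_gcd_dvd:
  assumes "0 < n" "b < n"
  shows "is_power_cyc n b a \<longleftrightarrow> gcd a n dvd b"
proof
  assume "is_power_cyc n b a"
  then obtain k :: int where k: "int b = (k * int a) mod int n"
    unfolding is_power_cyc_def by blast
  have "gcd (int a) (int n) dvd (k * int a) mod int n"
    by (simp add: dvd_mod)
  then show "gcd a n dvd b" using k by (simp flip: int_dvd_int_iff)
next
  assume "gcd a n dvd b"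
  then obtain m where m: "b = gcd a n * m" by blast
  obtain u v :: int where uv: "u * int a + v * int n = gcd (int a) (int n)"
    using bezout_int by blast
  have "(int m * u * int a) mod int n = (int m * (u * int a + v * int n)) mod int n"
    by (metis (no_types, lifting) mod_mult_self1 distrib_left mult.assoc mult.commute)
  also have "\<dots> = int b mod int n" using uv m by (simp add: mult.commute)
  also have "\<dots> = int b" using assms(2) by simp
  finally show "is_power_cyc n b a" unfolding is_power_cyc_def by metis
qed

lemma pg_adj_iff_gcd_comparable:
  assumes "0 < n" "a < n"
  shows "pg_adj n a b \<longleftrightarrow>
    b < n \<and> b \<noteq> a \<and> (gcd a n dvd gcd b n \<or> gcd b n dvd gcd a n)"
proof (cases "b < n")
  case True
  then show ?thesis
    using assms unfolding pg_adj_def is_power_cyc_iff_gcd_dvd[OF assms(1) True]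
      is_power_cyc_iff_gcd_dvd[OF assms] by auto
qed (auto simp: pg_adj_def)

definition gcd_incomparable_count :: "nat \<Rightarrow> nat \<Rightarrow> nat" where
  "gcd_incomparable_count n d = card {s \<in> {0..<n}. \<not> d dvd gcd s n \<and> \<not> gcd s n dvd d}"

lemma pg_deg_add_gcd_incomparable_count:
  assumes "a < n"
  shows "pg_deg n a + 1 + gcd_incomparable_count n (gcd a n) = n"
proof -
  define D where "D = {s \<in> {0..<n}. gcd a n dvd gcd s n \<or> gcd s n dvd gcd a n}"
  have "{s \<in> {0..<n}. pg_adj n a s} = D - {a}"
    using pg_adj_iff_gcd_comparable[of n a] assms unfolding D_def by auto
  moreover have "a \<in> D" "finite D" using assms unfolding D_def by auto
  moreover have "card D + gcd_incomparable_count n (gcd a n) = n"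
  proof -
    define E where "E = {s \<in> {0..<n}. \<not> gcd a n dvd gcd s n \<and> \<not> gcd s n dvd gcd a n}"
    have "D \<union> E = {0..<n}" "D \<inter> E = {}" unfolding D_def E_def by auto
    then show ?thesis unfolding gcd_incomparable_count_def E_def[symmetric]
      by (metis card_Un_disjoint card_atLeastLessThan diff_zero finite_Un finite_atLeastLessThan)
  qed
  ultimately show ?thesis
    unfolding pg_deg_def by (metis card_Suc_Diff1 Suc_eq_plus1)
qed

lemma pg_min_deg_eq_if_gcd_incomparable_count_max:
  assumes "a < n"
    and "\<And>s. s < n \<Longrightarrow> gcd_incomparable_count n (gcd s n) \<le> gcd_incomparable_count n (gcd a n)"
  shows "pg_min_deg n = pg_deg n a"
  unfolding pg_min_deg_def
proof (rule Min_eqI)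
  fix d assume "d \<in> pg_deg n ` {0..<n}"
  then obtain s where "s < n" "d = pg_deg n s" by auto
  then show "pg_deg n a \<le> d"
    using assms pg_deg_add_gcd_incomparable_count[of a n] pg_deg_add_gcd_incomparable_count[of s n]
    by fastforce
qed (use assms(1) in auto)

section \<open>Counting residues\<close>

lemma card_multiples_atLeastLessThan:
  assumes "m dvd N" "0 < m"
  shows "card {x \<in> {0..<N}. m dvd x} = N div m"
proof -
  obtain k where N: "N = m * k" using assms(1) by blast
  have "{x \<in> {0..<N}. m dvd x} = (\<lambda>i. m * i) ` {0..<N div m}"
    using assms(2) by (auto simp: N elim!: dvdE)
  moreover have "inj_on (\<lambda>i. m * i) {0..<N div m}" using assms by (auto simp: inj_on_def)
  ultimately show ?thesis by (simp add: card_image)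
qed

lemma card_Un3_add_Int:
  assumes "finite A" "finite B" "finite C"
  shows "card (A \<union> B \<union> C) + card (A \<inter> B) + card (A \<inter> C) + card (B \<inter> C)
       = card A + card B + card C + card (A \<inter> B \<inter> C)"
proof -
  have "card (A \<union> B) + card (A \<inter> B) = card A + card B"
    using card_Un_Int[of A B] assms by simp
  moreover have "card (A \<union> B \<union> C) + card ((A \<inter> C) \<union> (B \<inter> C)) = card (A \<union> B) + card C"
    using card_Un_Int[of "A \<union> B" C] assms by (simp add: Int_Un_distrib2)
  moreover have "card ((A \<inter> C) \<union> (B \<inter> C)) + card (A \<inter> B \<inter> C) = card (A \<inter> C) + card (B \<inter> C)"
    using card_Un_Int[of "A \<inter> C" "B \<inter> C"] assms by (simp add: Int_ac)
  ultimately show ?thesis by linarith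
qed

text \<open>For a prime \<open>P\<close> occurring with exponent \<open>e\<close> in \<open>n\<close>, the proportion of residues
  modulo \<open>n\<close> divisible by \<open>P ^ u\<close>.\<close>

definition inv_power_upto :: "nat \<Rightarrow> nat \<Rightarrow> nat \<Rightarrow> real" where
  "inv_power_upto P e u = (if u \<le> e then 1 / real P ^ u else 0)"

lemma inv_power_upto_0 [simp]: "inv_power_upto P e 0 = 1"
  by (simp add: inv_power_upto_def)

lemma inv_power_upto_Suc_0: "0 < e \<Longrightarrow> inv_power_upto P e (Suc 0) = 1 / real P"
  by (simp add: inv_power_upto_def)

lemma inv_power_upto_nonneg: "0 \<le> inv_power_upto P e u"
  by (simp add: inv_power_upto_def)

lemma inv_power_upto_le_1: "0 < P \<Longrightarrow> inv_power_upto P e u \<le> 1"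
  by (simp add: inv_power_upto_def)

lemma inv_power_upto_le_inv: "0 < P \<Longrightarrow> 0 < u \<Longrightarrow> inv_power_upto P e u \<le> 1 / real P"
  by (cases u) (auto simp: inv_power_upto_def divide_le_eq_1 field_simps)

lemma inv_power_upto_Suc_le: "inv_power_upto P e (Suc u) \<le> inv_power_upto P e u / real P"
  by (simp add: inv_power_upto_def mult.commute)

lemma inv_power_upto_antimono: "0 < P \<Longrightarrow> u \<le> v \<Longrightarrow> inv_power_upto P e v \<le> inv_power_upto P e u"
  by (auto simp: inv_power_upto_def divide_le_eq_1 field_simps power_increasing)

text \<open>For \<open>d = p ^ x * q ^ y * r ^ z\<close>, let \<open>\<alpha>\<close>, \<open>\<beta>\<close>, \<open>\<gamma>\<close> be the proportions of residues
  divisible by \<open>p ^ x\<close>, \<open>q ^ y\<close>, \<open>r ^ z\<close> and \<open>u\<close>, \<open>v\<close>, \<open>w\<close> those divisible by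
  \<open>p ^ (x + 1)\<close>, \<open>q ^ (y + 1)\<close>, \<open>r ^ (z + 1)\<close>. The first term counts the residues whose gcd
  with \<open>n\<close> does not divide \<open>d\<close>, the second those whose gcd is a proper multiple of \<open>d\<close>.\<close>

definition incomparable_ratio :: "real \<Rightarrow> real \<Rightarrow> real \<Rightarrow> real \<Rightarrow> real \<Rightarrow> real \<Rightarrow> real" where
  "incomparable_ratio \<alpha> u \<beta> v \<gamma> w =
     (1 - (1 - u) * (1 - v) * (1 - w)) - (\<alpha> * \<beta> * \<gamma> - (\<alpha> - u) * (\<beta> - v) * (\<gamma> - w))"

lemma three_primes_bound_inv_sq:
  fixes p q r :: real
  assumes p: "2 \<le> p" and q: "p + 1 \<le> q" and r: "2 * q + 1 \<le> r"
  shows "1 - (1 - 1/p^2) * (1 - 1/q) * (1 - 1/r) \<le> (1 - (1 - 1/p) * (1 - 1/q)) * (1 - 1/r)"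
proof -
  have "p^2 * q \<le> 2 * (p - 1) * p * q"
    using p q by (intro mult_right_mono) (auto simp: power2_eq_square algebra_simps)
  also have "\<dots> = (2 * (p - 1) * q) * p" by (simp add: algebra_simps)
  also have "\<dots> \<le> (2 * (p - 1) * q) * (q - 1)" using p q by (intro mult_left_mono) auto
  also have "\<dots> = 2 * q * ((p - 1) * (q - 1))" by (simp add: algebra_simps)
  also have "\<dots> \<le> (r - 1) * ((p - 1) * (q - 1))" using p q r by (intro mult_right_mono) auto
  finally have key: "0 \<le> (r - 1) * ((p - 1) * (q - 1)) - p^2 * q" by simp
  have "(1 - (1 - 1/p) * (1 - 1/q)) * (1 - 1/r) - (1 - (1 - 1/p^2) * (1 - 1/q) * (1 - 1/r))
      = ((r - 1) * ((p - 1) * (q - 1)) - p^2 * q) / (p^2 * q * r)"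
    using p q r by (simp add: field_simps power2_eq_square)
  also have "\<dots> \<ge> 0" using p q r key by simp
  finally show ?thesis by simp
qed

lemma three_primes_bound_inv_q_sq:
  fixes p q r :: real
  assumes p: "2 \<le> p" and q: "p + 1 \<le> q" and r: "2 * q + 1 \<le> r"
  shows "1/p + (1 - 1/p) / q^2 \<le> (1 - (1 - 1/p) * (1 - 1/q)) * (1 - 1/r)"
proof -
  have sq: "q^2 \<le> 2 * q^2 - 2 * q - 1"
    using p q mult_mono[of 2 "q - 1" 2 "q - 1"] by (simp add: power2_eq_square algebra_simps)
  also have "\<dots> \<le> (p - 1) * (2 * q^2 - 2 * q - 1)"
  proof -
    have "0 \<le> 2 * q^2 - 2 * q - 1" using sq zero_le_power2[of q] by linarith
    then show ?thesis using p mult_right_mono[of 1 "p - 1"] by simp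
  qed
  finally have "q * (p + q - 1) \<le> (2 * q + 1) * ((p - 1) * (q - 1))"
    by (simp add: algebra_simps power2_eq_square)
  also have "\<dots> \<le> r * ((p - 1) * (q - 1))" using p q r by (intro mult_right_mono) auto
  finally have key: "0 \<le> r * ((p - 1) * (q - 1)) - q * (p + q - 1)" by simp
  have "(1 - (1 - 1/p) * (1 - 1/q)) * (1 - 1/r) - (1/p + (1 - 1/p) / q^2)
      = (r * ((p - 1) * (q - 1)) - q * (p + q - 1)) / (p * q^2 * r)"
    using p q r by (simp add: field_simps power2_eq_square)
  also have "\<dots> \<ge> 0" using p q r key by simp
  finally show ?thesis by simp
qed

lemma three_primes_bound_inv_r:
  fixes p q r :: real
  assumes p: "2 \<le> p" and q: "p + 1 \<le> q" and r: "2 * q + 1 \<le> r"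
  shows "1/p + (1 - 1/p) / r \<le> (1 - (1 - 1/p) * (1 - 1/q)) * (1 - 1/r)"
proof -
  have "p * q \<le> 2 * q * (p - 1)" using p q by (simp add: algebra_simps)
  also have "\<dots> \<le> (r - 1) * (p - 1)" using p r by (intro mult_right_mono) auto
  finally have key: "0 \<le> (r - 1) * (p - 1) - p * q" by simp
  have "(1 - (1 - 1/p) * (1 - 1/q)) * (1 - 1/r) - (1/p + (1 - 1/p) / r)
      = ((r - 1) * (p - 1) - p * q) / (p * q * r)"
    using p q r by (simp add: field_simps)
  also have "\<dots> \<ge> 0" using p q r key by simp
  finally show ?thesis by simp
qed

lemma divide_le_self_real: "0 \<le> (x::real) \<Longrightarrow> 1 \<le> d \<Longrightarrow> x / d \<le> x"
  by (simp add: divide_le_eq mult_le_cancel_left1 order.trans[OF zero_le_one])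

lemma incomparable_ratio_le_if_le_inv_p:
  fixes p q r \<alpha> \<beta> \<gamma> u v w :: real
  assumes p: "2 \<le> p" and q: "p + 1 \<le> q" and r: "2 * q + 1 \<le> r"
    and \<alpha>: "0 \<le> \<alpha>" "\<alpha> \<le> 1/p" and u: "0 \<le> u" "u \<le> \<alpha> / p"
    and \<beta>: "0 \<le> \<beta>" "\<beta> \<le> 1" and v: "0 \<le> v" "v \<le> \<beta> / q"
    and \<gamma>: "0 \<le> \<gamma>" "\<gamma> \<le> 1" and w: "0 \<le> w" "w \<le> \<gamma> / r"
  shows "incomparable_ratio \<alpha> u \<beta> v \<gamma> w \<le> (1 - (1 - 1/p) * (1 - 1/q)) * (1 - 1/r)"
proof -
  have "u \<le> \<alpha>" "v \<le> \<beta>" "w \<le> \<gamma>"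
    using u v w divide_le_self_real[of \<alpha> p] divide_le_self_real[of \<beta> q]
      divide_le_self_real[of \<gamma> r] \<alpha> \<beta> \<gamma> p q r by linarith+
  then have "(\<alpha> - u) * (\<beta> - v) * (\<gamma> - w) \<le> \<alpha> * \<beta> * \<gamma>"
    using u v w \<alpha> \<beta> \<gamma> by (intro mult_mono) auto
  moreover have "(1 - 1/p^2) * (1 - 1/q) * (1 - 1/r) \<le> (1 - u) * (1 - v) * (1 - w)"
  proof -
    have "u \<le> 1/p^2" using u divide_right_mono[OF \<alpha>(2), of p] p by (simp add: power2_eq_square)
    moreover have "v \<le> 1/q" using v divide_right_mono[OF \<beta>(2), of q] p q by simp
    moreover have "w \<le> 1/r" using w divide_right_mono[OF \<gamma>(2), of r] p q r by simp
    moreover have "1/p^2 \<le> 1" "1/q \<le> 1" "1/r \<le> 1"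
      using p q r mult_mono[of 1 p 1 p] by (auto simp: power2_eq_square)
    ultimately show ?thesis by (intro mult_mono) auto
  qed
  ultimately have "incomparable_ratio \<alpha> u \<beta> v \<gamma> w \<le> 1 - (1 - 1/p^2) * (1 - 1/q) * (1 - 1/r)"
    unfolding incomparable_ratio_def by linarith
  then show ?thesis using three_primes_bound_inv_sq[OF p q r] by linarith
qed

lemma incomparable_ratio_le_if_le_inv_q:
  fixes p q r \<beta> \<gamma> v w :: real
  assumes p: "2 \<le> p" and q: "p + 1 \<le> q" and r: "2 * q + 1 \<le> r"
    and \<beta>: "0 \<le> \<beta>" "\<beta> \<le> 1/q" and v: "0 \<le> v" "v \<le> \<beta> / q"
    and \<gamma>: "0 \<le> \<gamma>" "\<gamma> \<le> 1" and w: "0 \<le> w" "w \<le> \<gamma> / r"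
  shows "incomparable_ratio 1 (1/p) \<beta> v \<gamma> w \<le> (1 - (1 - 1/p) * (1 - 1/q)) * (1 - 1/r)"
proof -
  define k where "k = 1 - 1/p"
  define slope where "slope = k/r - \<beta>/p - k*\<beta>/q - k*\<beta>/r"
  have k: "0 \<le> k" "k \<le> 1" unfolding k_def using p by auto
  have \<beta>1: "\<beta> \<le> 1" using \<beta> q p by (simp add: divide_le_eq_1 order.trans)
  have "incomparable_ratio 1 (1/p) \<beta> v \<gamma> w = (1 - \<beta>*\<gamma>)/p + k * (v*(1 - \<gamma>) + w*(1 - \<beta>))"
    using p unfolding incomparable_ratio_def k_def by (simp add: field_simps)
  also have "\<dots> \<le> (1 - \<beta>*\<gamma>)/p + k * ((\<beta>/q)*(1 - \<gamma>) + (\<gamma>/r)*(1 - \<beta>))"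
    using v w \<beta> \<beta>1 \<gamma> k p q by (intro add_left_mono mult_left_mono add_mono mult_right_mono) auto
  also have "\<dots> = 1/p + k*\<beta>/q + \<gamma> * slope"
    using p q r unfolding slope_def by (simp add: field_simps)
  \<comment> \<open>affine in \<open>\<gamma> \<in> [0, 1]\<close>, so bounded by its value at an endpoint\<close>
  also have "\<dots> \<le> (1 - (1 - 1/p) * (1 - 1/q)) * (1 - 1/r)"
  proof (cases "slope \<le> 0")
    case True
    have "k*\<beta>/q \<le> k/q^2"
      using k \<beta> q p mult_left_mono[of \<beta> "1/q" k] divide_right_mono[of "k*\<beta>" "k/q" q]
      by (simp add: power2_eq_square)
    moreover have "\<gamma> * slope \<le> 0" using True \<gamma> by (simp add: mult_nonneg_nonpos)
    ultimately show ?thesis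
      using three_primes_bound_inv_q_sq[OF p q r] unfolding k_def by linarith
  next
    case False
    have "\<gamma> * slope \<le> slope" using False \<gamma> mult_right_mono[of \<gamma> 1 slope] by simp
    moreover have "0 \<le> \<beta>/p" "0 \<le> k*\<beta>/r" using \<beta> k p q r by auto
    ultimately show ?thesis
      using three_primes_bound_inv_r[OF p q r] unfolding k_def slope_def by linarith
  qed
  finally show ?thesis .
qed

lemma incomparable_ratio_1_1:
  "incomparable_ratio 1 u 1 v \<gamma> w = (1 - (1 - u) * (1 - v)) * (1 - \<gamma>)"
  unfolding incomparable_ratio_def by (simp add: algebra_simps)

section \<open>Integers with three prime factors\<close>

locale three_prime_powers =
  fixes p q r a b c n :: nat
  assumes prime: "prime p" "prime q" "prime r"
    and distinct: "p \<noteq> q" "p \<noteq> r" "q \<noteq> r"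
    and n_eq: "n = p ^ a * q ^ b * r ^ c"
begin

abbreviation frac_p :: "nat \<Rightarrow> real" where "frac_p \<equiv> inv_power_upto p a"
abbreviation frac_q :: "nat \<Rightarrow> real" where "frac_q \<equiv> inv_power_upto q b"
abbreviation frac_r :: "nat \<Rightarrow> real" where "frac_r \<equiv> inv_power_upto r c"

definition pqr_pow :: "nat \<Rightarrow> nat \<Rightarrow> nat \<Rightarrow> nat" where
  "pqr_pow i j k = p ^ i * q ^ j * r ^ k"

lemma pqr_pow_nonzero: "pqr_pow i j k \<noteq> 0"
  using prime unfolding pqr_pow_def by (auto simp: prime_gt_0_nat)

lemma multiplicity_pqr_pow:
  "multiplicity p (pqr_pow i j k) = i"
  "multiplicity q (pqr_pow i j k) = j"
  "multiplicity r (pqr_pow i j k) = k"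
  using prime distinct
  by (simp_all add: pqr_pow_def prime_elem_multiplicity_mult_distrib prime_gt_0_nat
      multiplicity_distinct_prime_power)

lemma pqr_pow_dvd_iff: "pqr_pow i j k dvd pqr_pow i' j' k' \<longleftrightarrow> i \<le> i' \<and> j \<le> j' \<and> k \<le> k'"
proof
  assume "pqr_pow i j k dvd pqr_pow i' j' k'"
  from dvd_imp_multiplicity_le[OF this pqr_pow_nonzero] show "i \<le> i' \<and> j \<le> j' \<and> k \<le> k'"
    by (metis multiplicity_pqr_pow)
qed (auto simp: pqr_pow_def intro!: mult_dvd_mono le_imp_power_dvd)

lemma divisor_eq_pqr_pow:
  assumes "d dvd n"
  obtains i j k where "i \<le> a" "j \<le> b" "k \<le> c" "d = pqr_pow i j k"
proof -
  obtain d1 d2 where d: "d = d1 * d2" "d1 dvd p ^ a * q ^ b" "d2 dvd r ^ c"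
    using assms division_decomp unfolding n_eq by blast
  obtain d11 d12 where d1: "d1 = d11 * d12" "d11 dvd p ^ a" "d12 dvd q ^ b"
    using d(2) division_decomp by blast
  show ?thesis
    using d d1 divides_primepow_nat[OF prime(1)] divides_primepow_nat[OF prime(2)]
      divides_primepow_nat[OF prime(3)] that unfolding pqr_pow_def by metis
qed

definition vp :: "nat \<Rightarrow> nat" where "vp s = multiplicity p (gcd s n)"
definition vq :: "nat \<Rightarrow> nat" where "vq s = multiplicity q (gcd s n)"
definition vr :: "nat \<Rightarrow> nat" where "vr s = multiplicity r (gcd s n)"

lemma gcd_n_eq_pqr_pow: "gcd s n = pqr_pow (vp s) (vq s) (vr s)"
  and v_le: "vp s \<le> a" "vq s \<le> b" "vr s \<le> c"
proof -
  obtain i j k where "i \<le> a" "j \<le> b" "k \<le> c" "gcd s n = pqr_pow i j k"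
    using divisor_eq_pqr_pow[of "gcd s n"] by auto
  then show "gcd s n = pqr_pow (vp s) (vq s) (vr s)" "vp s \<le> a" "vq s \<le> b" "vr s \<le> c"
    unfolding vp_def vq_def vr_def by (auto simp: multiplicity_pqr_pow)
qed

definition gcd_multiples :: "nat \<Rightarrow> nat \<Rightarrow> nat \<Rightarrow> nat set" where
  "gcd_multiples i j k = {s \<in> {0..<n}. i \<le> vp s \<and> j \<le> vq s \<and> k \<le> vr s}"

lemma gcd_multiples_Int:
  "gcd_multiples i j k \<inter> gcd_multiples i' j' k' = gcd_multiples (max i i') (max j j') (max k k')"
  unfolding gcd_multiples_def by auto

lemma card_gcd_multiples:
  "real (card (gcd_multiples i j k)) = real n * frac_p i * frac_q j * frac_r k"
proof (cases "i \<le> a \<and> j \<le> b \<and> k \<le> c")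
  case True
  then have dvd: "pqr_pow i j k dvd n"
    using pqr_pow_dvd_iff[of i j k a b c] n_eq pqr_pow_def by simp
  have "gcd_multiples i j k = {s \<in> {0..<n}. pqr_pow i j k dvd s}"
    unfolding gcd_multiples_def using pqr_pow_dvd_iff gcd_n_eq_pqr_pow dvd
    by (metis gcd_greatest_iff)
  then have "real (card (gcd_multiples i j k)) = real n / real (pqr_pow i j k)"
    using card_multiples_atLeastLessThan[OF dvd] pqr_pow_nonzero real_of_nat_div[OF dvd] by simp
  then show ?thesis using True by (simp add: pqr_pow_def inv_power_upto_def)
next
  case False
  then have "\<not> (i \<le> vp s \<and> j \<le> vq s \<and> k \<le> vr s)" for s
    using v_le[of s] by linarith
  then have "gcd_multiples i j k = {}" unfolding gcd_multiples_def by blast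
  then show ?thesis using False by (auto simp: inv_power_upto_def)
qed

lemma card_gcd_multiples_Un3:
  assumes "i \<le> i'" "j \<le> j'" "k \<le> k'"
  shows "real (card (gcd_multiples i' j k \<union> gcd_multiples i j' k \<union> gcd_multiples i j k'))
    = real n *
    (frac_p i * frac_q j * frac_r k
     - (frac_p i - frac_p i') * (frac_q j - frac_q j')
       * (frac_r k - frac_r k'))"
proof -
  have "finite (gcd_multiples i j k)" for i j k unfolding gcd_multiples_def by simp
  then have "real (card (gcd_multiples i' j k \<union> gcd_multiples i j' k \<union> gcd_multiples i j k'))
      = real (card (gcd_multiples i' j k)) + real (card (gcd_multiples i j' k))
        + real (card (gcd_multiples i j k')) - real (card (gcd_multiples i' j' k))
        - real (card (gcd_multiples i' j k')) - real (card (gcd_multiples i j' k'))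
        + real (card (gcd_multiples i' j' k'))"
    using assms
      card_Un3_add_Int[of "gcd_multiples i' j k" "gcd_multiples i j' k" "gcd_multiples i j k'"]
    by (simp add: gcd_multiples_Int max_absorb1 max_absorb2 flip: of_nat_add)
  then show ?thesis unfolding card_gcd_multiples by (simp add: algebra_simps)
qed

lemma gcd_incomparable_count_pqr_pow:
  "real (gcd_incomparable_count n (pqr_pow i j k)) = real n *
    incomparable_ratio (frac_p i) (frac_p (i + 1)) (frac_q j) (frac_q (j + 1))
      (frac_r k) (frac_r (k + 1))"
proof -
  define U where
    "U = gcd_multiples (i + 1) 0 0 \<union> gcd_multiples 0 (j + 1) 0 \<union> gcd_multiples 0 0 (k + 1)"
  define V where
    "V = gcd_multiples (i + 1) j k \<union> gcd_multiples i (j + 1) k \<union> gcd_multiples i j (k + 1)"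
  have "{s \<in> {0..<n}. \<not> pqr_pow i j k dvd gcd s n \<and> \<not> gcd s n dvd pqr_pow i j k} = U - V"
    unfolding U_def V_def gcd_multiples_def gcd_n_eq_pqr_pow pqr_pow_dvd_iff by auto
  moreover have "V \<subseteq> U" "finite U" unfolding U_def V_def gcd_multiples_def by auto
  ultimately have "real (gcd_incomparable_count n (pqr_pow i j k)) = real (card U) - real (card V)"
    unfolding gcd_incomparable_count_def
    by (simp add: card_Diff_subset card_mono of_nat_diff finite_subset)
  then show ?thesis
    unfolding U_def V_def card_gcd_multiples_Un3[OF le0 le0 le0]
      card_gcd_multiples_Un3[OF le_add1 le_add1 le_add1] incomparable_ratio_def
    by (simp add: algebra_simps)
qed

end

locale three_prime_powers_gap = three_prime_powers +
  assumes exps_pos: "0 < a" "0 < b" "0 < c"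
    and p_less_q: "p < q" and gap: "2 * q + 1 \<le> r"
begin

lemma incomparable_ratio_pqr_pow_le:
  assumes "k \<le> c"
  shows "incomparable_ratio (frac_p i) (frac_p (i + 1)) (frac_q j) (frac_q (j + 1))
      (frac_r k) (frac_r (k + 1))
    \<le> (1 - (1 - 1/p) * (1 - 1/q)) * (1 - frac_r c)"
proof -
  have P: "2 \<le> real p" and Q: "real p + 1 \<le> real q" and R: "2 * real q + 1 \<le> real r"
    using prime_ge_2_nat[OF prime(1)] p_less_q gap by linarith+
  have pos: "0 < p" "0 < q" "0 < r" using prime by (auto simp: prime_gt_0_nat)
  have A: "0 \<le> 1 - (1 - 1/p) * (1 - 1/q)" using P Q by (simp add: mult_le_one)
  have "frac_r c \<le> 1 / real r"
    using inv_power_upto_le_inv[of r c c] pos exps_pos by simp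
  then have r_bound: "(1 - (1 - 1/p) * (1 - 1/q)) * (1 - 1/r)
      \<le> (1 - (1 - 1/p) * (1 - 1/q)) * (1 - frac_r c)"
    using A by (intro mult_left_mono) auto
  note power_facts = inv_power_upto_nonneg inv_power_upto_le_1 inv_power_upto_le_inv
    inv_power_upto_Suc_le[simplified]
  consider "0 < i" | "i = 0" "0 < j" | "i = 0" "j = 0" by blast
  then show ?thesis
  proof cases
    case 1
    have "incomparable_ratio (frac_p i) (frac_p (i + 1)) (frac_q j) (frac_q (j + 1))
      (frac_r k) (frac_r (k + 1))
      \<le> (1 - (1 - 1/p) * (1 - 1/q)) * (1 - 1/r)"
      by (rule incomparable_ratio_le_if_le_inv_p[OF P Q R])
        (use 1 pos in \<open>simp_all add: power_facts\<close>)
    then show ?thesis using r_bound by linarith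
  next
    case 2
    have "incomparable_ratio 1 (1/p) (frac_q j) (frac_q (j + 1))
      (frac_r k) (frac_r (k + 1))
      \<le> (1 - (1 - 1/p) * (1 - 1/q)) * (1 - 1/r)"
      by (rule incomparable_ratio_le_if_le_inv_q[OF P Q R])
        (use 2 pos in \<open>simp_all add: power_facts\<close>)
    then show ?thesis using 2 r_bound inv_power_upto_Suc_0[OF exps_pos(1)] by simp
  next
    case 3
    have "frac_r c \<le> frac_r k"
      by (rule inv_power_upto_antimono[OF pos(3) assms])
    then show ?thesis
      using 3 A exps_pos by (simp add: inv_power_upto_Suc_0 incomparable_ratio_1_1 mult_left_mono)
  qed
qed

lemma gcd_incomparable_count_le_top:
  assumes "s < n"
  shows "gcd_incomparable_count n (gcd s n) \<le> gcd_incomparable_count n (r ^ c)"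
proof -
  have "r ^ c = pqr_pow 0 0 c" unfolding pqr_pow_def by simp
  then have top: "real (gcd_incomparable_count n (r ^ c))
      = real n * ((1 - (1 - 1/p) * (1 - 1/q)) * (1 - frac_r c))"
    using gcd_incomparable_count_pqr_pow[of 0 0 c] exps_pos
    by (simp add: inv_power_upto_Suc_0 incomparable_ratio_1_1 inv_power_upto_def)
  have "real (gcd_incomparable_count n (gcd s n)) = real n *
    incomparable_ratio (frac_p (vp s)) (frac_p (vp s + 1))
      (frac_q (vq s)) (frac_q (vq s + 1))
      (frac_r (vr s)) (frac_r (vr s + 1))"
    unfolding gcd_n_eq_pqr_pow[of s] using gcd_incomparable_count_pqr_pow .
  also have "\<dots> \<le> real n * ((1 - (1 - 1/p) * (1 - 1/q)) * (1 - frac_r c))"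
    by (intro mult_left_mono incomparable_ratio_pqr_pow_le v_le(3)) simp
  also have "\<dots> = real (gcd_incomparable_count n (r ^ c))" using top by simp
  finally show ?thesis by simp
qed

end

theorem corollary5p3:
  fixes n p1 p2 p3 a1 a2 a3 :: nat
  assumes "prime p1" "prime p2" "prime p3"
    and "p1 < p2" "p2 < p3"
    and "a1 > 0" "a2 > 0" "a3 > 0"
    and "n = p1 ^ a1 * p2 ^ a2 * p3 ^ a3"
    and "p3 \<ge> 2 * p2 + 1"
  shows "pg_min_deg n = pg_deg n (p3 ^ a3)"
proof -
  interpret three_prime_powers_gap p1 p2 p3 a1 a2 a3 n
    using assms by unfold_locales auto
  have "1 < p1 ^ a1 * p2 ^ a2"
    using one_less_power[OF prime_gt_1_nat[OF assms(1)] assms(6)] prime_gt_0_nat[OF assms(2)]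
    by (simp add: less_le_trans)
  then have "p3 ^ a3 < n" using assms(3,9) prime_gt_0_nat by simp
  moreover have "gcd (p3 ^ a3) n = p3 ^ a3" using assms(9) by simp
  ultimately show ?thesis
    using pg_min_deg_eq_if_gcd_incomparable_count_max gcd_incomparable_count_le_top by metis
qed

end
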